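(* For all integers $k\geq1$, $c_{ECH}^k(E(1,2))=c_{ECH}^k(C(1))$.
   Context: For $a,b>0$, let $N_0\leq N_1\leq N_2\leq\cdots$ be the numbers $ma+nb$ with $m,n\in\mathbb{Z}_{\geq0}$ arranged in nondecreasing order with multiplicities (so $N_0=0$), and set $c_{ECH}^k(E(a,b)):=N_k$ for $k\geq0$. For the polydisc $P(a,b)$ set $c_{ECH}^k(P(a,b)):=\min\{am+bn: m,n\in\mathbb{Z}_{\geq0},\ (m+1)(n+1)\geq k+1\}$. The cube $C(1)$ is $P(1,1)$. *)

theory Defs
  imports Complex_Main
begin

text \<open>Number of pairs (m,n) of nonnegative integers with m*a + n*b <= L.
  For a,b > 0 this set is finite.\<close>
definition ell_count :: "real \<Rightarrow> real \<Rightarrow> real \<Rightarrow> nat" where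
  "ell_count a b L = card {(m::nat, n::nat). real m * a + real n * b \<le> L}"

text \<open>N_k: the k-th entry (0-indexed) of the numbers m*a+n*b arranged in
  nondecreasing order with multiplicities, i.e. the smallest attained value L
  such that more than k of the pairs (m,n) have value at most L.\<close>
definition c_ech_ellipsoid :: "nat \<Rightarrow> real \<Rightarrow> real \<Rightarrow> real" where
  "c_ech_ellipsoid k a b =
     (LEAST L. (\<exists>m n::nat. L = real m * a + real n * b) \<and> k < ell_count a b L)"

definition c_ech_polydisc :: "nat \<Rightarrow> real \<Rightarrow> real \<Rightarrow> real" where
  "c_ech_polydisc k a b =
     (LEAST L. \<exists>m n::nat. L = a * real m + b * real n \<and> (m + 1) * (n + 1) \<ge> k + 1)"

abbreviation c_ech_cube :: "nat \<Rightarrow> real \<Rightarrow> real" where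
  "c_ech_cube k c \<equiv> c_ech_polydisc k c c"

end

theory Submission
  imports Defs
begin

text \<open>For \<open>E(1,2)\<close> the values \<open>m + 2n\<close> are the naturals \<open>s\<close>, and the number of pairs with
  \<open>m + 2n \<le> s\<close> is \<open>(\<lfloor>s/2\<rfloor> + 1)(\<lceil>s/2\<rceil> + 1)\<close>. For the cube the values \<open>m + n\<close> are again
  the naturals, and by AM-GM the largest \<open>(m+1)(n+1)\<close> with \<open>m + n = s\<close> is the same number,
  attained at the balanced split. So both capacities are the least \<open>s\<close> whose count exceeds \<open>k\<close>.\<close>

definition balanced_box :: "nat \<Rightarrow> nat" where
  "balanced_box s = (s div 2 + 1) * ((s + 1) div 2 + 1)"

lemma balanced_box_Suc: "balanced_box (Suc s) = balanced_box s + (Suc s div 2 + 1)"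
proof (cases "even s")
  case True
  then obtain j where "s = 2 * j" by blast
  then show ?thesis by (simp add: balanced_box_def)
next
  case False
  then obtain j where "s = 2 * j + 1" using oddE by blast
  then show ?thesis by (simp add: balanced_box_def)
qed

lemma card_line_1_2: "card {(m::nat, n::nat). m + 2 * n = t} = t div 2 + 1"
proof -
  have "{(m::nat, n::nat). m + 2 * n = t} = (\<lambda>n. (t - 2 * n, n)) ` {..t div 2}"
    by (auto simp: image_iff)
  moreover have "inj_on (\<lambda>n. (t - 2 * n, n)) {..t div 2}"
    by (auto simp: inj_on_def)
  ultimately show ?thesis by (simp add: card_image)
qed

lemma finite_triangle_1_2: "finite {(m::nat, n::nat). m + 2 * n \<le> s}"
  by (rule finite_subset[of _ "{..s} \<times> {..s}"]) auto

lemma card_triangle_1_2: "card {(m::nat, n::nat). m + 2 * n \<le> s} = balanced_box s"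
proof (induction s)
  case 0
  have "{(m::nat, n::nat). m + 2 * n \<le> 0} = {(0, 0)}" by auto
  then show ?case by (simp add: balanced_box_def)
next
  case (Suc s)
  have split: "{(m::nat, n::nat). m + 2 * n \<le> Suc s} =
      {(m, n). m + 2 * n \<le> s} \<union> {(m, n). m + 2 * n = Suc s}" by auto
  have "finite {(m::nat, n::nat). m + 2 * n = Suc s}"
    by (rule finite_subset[OF _ finite_triangle_1_2[of "Suc s"]]) auto
  then show ?case
    unfolding split using finite_triangle_1_2 Suc card_line_1_2[of "Suc s"]
    by (subst card_Un_disjoint) (auto simp: balanced_box_Suc)
qed

lemma ell_count_1_2: "ell_count 1 2 (real s) = balanced_box s"
proof -
  have "{(m::nat, n::nat). real m * 1 + real n * 2 \<le> real s} = {(m, n). m + 2 * n \<le> s}"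
    by (auto simp flip: of_nat_add of_nat_mult)
  then show ?thesis unfolding ell_count_def by (simp add: card_triangle_1_2)
qed

lemma box_le_balanced_box: "(m + 1) * (n + 1) \<le> balanced_box (m + n)"
proof -
  have "int (4 * ((m + 1) * (n + 1))) \<le> int ((m + n + 2)\<^sup>2)"
    using zero_le_power2[of "int m - int n"] by (simp add: power2_eq_square algebra_simps)
  then have amgm: "4 * ((m + 1) * (n + 1)) \<le> (m + n + 2)\<^sup>2" by linarith
  have "(m + n + 2)\<^sup>2 \<le> 4 * balanced_box (m + n) + 1"
  proof (cases "even (m + n)")
    case True
    then obtain j where "m + n = 2 * j" by blast
    then show ?thesis by (simp add: balanced_box_def power2_eq_square algebra_simps)
  next
    case False
    then obtain j where "m + n = 2 * j + 1" using oddE by blast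
    then show ?thesis by (simp add: balanced_box_def power2_eq_square algebra_simps)
  qed
  with amgm show ?thesis by linarith
qed

lemma ellipsoid_1_2_threshold_iff:
  "((\<exists>m n::nat. L = real m * 1 + real n * 2) \<and> k < ell_count 1 2 L)
     \<longleftrightarrow> (\<exists>s. L = real s \<and> k < balanced_box s)"
proof
  assume "(\<exists>m n::nat. L = real m * 1 + real n * 2) \<and> k < ell_count 1 2 L"
  then obtain m n where "L = real (m + 2 * n)" "k < ell_count 1 2 L"
    by (metis mult_1_right of_nat_add of_nat_mult of_nat_numeral mult.commute)
  then show "\<exists>s. L = real s \<and> k < balanced_box s"
    by (metis ell_count_1_2)
next
  assume "\<exists>s. L = real s \<and> k < balanced_box s"
  then obtain s where "L = real s" "k < balanced_box s" by auto
  moreover have "real s = real s * 1 + real 0 * 2" by simp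
  ultimately show "(\<exists>m n::nat. L = real m * 1 + real n * 2) \<and> k < ell_count 1 2 L"
    by (metis ell_count_1_2)
qed

lemma cube_threshold_iff:
  "(\<exists>m n::nat. L = 1 * real m + 1 * real n \<and> (m + 1) * (n + 1) \<ge> k + 1)
     \<longleftrightarrow> (\<exists>s. L = real s \<and> k < balanced_box s)"
proof
  assume "\<exists>m n::nat. L = 1 * real m + 1 * real n \<and> (m + 1) * (n + 1) \<ge> k + 1"
  then obtain m n where "L = real (m + n)" "(m + 1) * (n + 1) \<ge> k + 1" by auto
  with box_le_balanced_box[of m n] show "\<exists>s. L = real s \<and> k < balanced_box s"
    by (intro exI[of _ "m + n"]) auto
next
  assume "\<exists>s. L = real s \<and> k < balanced_box s"
  then obtain s where s: "L = real s" "k < balanced_box s" by auto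
  have "s div 2 + (s + 1) div 2 = s" by presburger
  with s have "L = 1 * real (s div 2) + 1 * real ((s + 1) div 2)"
    by (metis mult_1 of_nat_add)
  moreover have "(s div 2 + 1) * ((s + 1) div 2 + 1) \<ge> k + 1"
    using s by (simp add: balanced_box_def)
  ultimately show "\<exists>m n::nat. L = 1 * real m + 1 * real n \<and> (m + 1) * (n + 1) \<ge> k + 1"
    by blast
qed

theorem lemma2p6:
  fixes k :: nat
  assumes "k \<ge> 1"
  shows "c_ech_ellipsoid k 1 2 = c_ech_cube k 1"
  unfolding c_ech_ellipsoid_def c_ech_polydisc_def
  by (simp only: ellipsoid_1_2_threshold_iff cube_threshold_iff)

end
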